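(* Let $K$ be a field of characteristic $\neq 2$ and let $\mathcal C$ be a 2-dimensional EACP over $K$ (natural basis $\{h,r\}$) with $\mathcal C^2\neq0$. Then $\mathcal C$ is isomorphic to exactly one of the following algebras with basis $\{h,r\}$: $\mathcal C_1$: $rh=hr=h$, $h^2=r^2=0$; $\mathcal C_2$: $rh=hr=\frac12(h+r)$, $h^2=r^2=0$; and $\mathcal C_1$, $\mathcal C_2$ are not isomorphic.
   Context: An EACP over a field $K$ (characteristic $\neq 2$) is a $K$-algebra $\mathcal C$ with a basis $\{h_1,\dots,h_n,r\}$ (called a natural basis) whose multiplication is determined by bilinearity from $$h_ir=rh_i=\tfrac12\Big(\sum_{j=1}^n a_{ij}h_j+b_ir\Big),\qquad h_ih_j=0\ (i,j=1,\dots,n),\qquad rr=0,$$ for some constants $a_{ij},b_i\in K$. For $n=1$ this reads $hr=rh=\frac12(ah+br)$, $h^2=r^2=0$. $\mathcal C^2$ denotes the span of all products $xy$, $x,y\in\mathcal C$. Isomorphism means algebra isomorphism. *)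

theory Defs
  imports Main
begin

text \<open>Elements of a 2-dimensional K-algebra are coordinate pairs (x1,x2) = x1 h + x2 r
  with respect to the natural basis {h, r}.\<close>

definition vadd :: "'a::field \<times> 'a \<Rightarrow> 'a \<times> 'a \<Rightarrow> 'a \<times> 'a" where
  "vadd u v = (fst u + fst v, snd u + snd v)"

definition vscale :: "'a::field \<Rightarrow> 'a \<times> 'a \<Rightarrow> 'a \<times> 'a" where
  "vscale c u = (c * fst u, c * snd u)"

definition bilin_mult ::
  "'a::field \<times> 'a \<Rightarrow> 'a \<times> 'a \<Rightarrow> 'a \<times> 'a \<Rightarrow> 'a \<times> 'a \<Rightarrow> 'a \<times> 'a \<Rightarrow> 'a \<times> 'a \<Rightarrow> 'a \<times> 'a" where
  "bilin_mult hh hr rh rr x y =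
     vadd (vadd (vscale (fst x * fst y) hh) (vscale (fst x * snd y) hr))
          (vadd (vscale (snd x * fst y) rh) (vscale (snd x * snd y) rr))"

text \<open>The 2-dimensional EACP with constants a, b: hr = rh = 1/2 (a h + b r), h^2 = r^2 = 0.\<close>
definition eacp2 :: "'a::field \<Rightarrow> 'a \<Rightarrow> 'a \<times> 'a \<Rightarrow> 'a \<times> 'a \<Rightarrow> 'a \<times> 'a" where
  "eacp2 a b = bilin_mult (0,0) (a/2, b/2) (a/2, b/2) (0,0)"

definition C1 :: "'a::field \<times> 'a \<Rightarrow> 'a \<times> 'a \<Rightarrow> 'a \<times> 'a" where
  "C1 = bilin_mult (0,0) (1,0) (1,0) (0,0)"

definition C2 :: "'a::field \<times> 'a \<Rightarrow> 'a \<times> 'a \<Rightarrow> 'a \<times> 'a" where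
  "C2 = bilin_mult (0,0) (1/2,1/2) (1/2,1/2) (0,0)"

definition klinear :: "('a::field \<times> 'a \<Rightarrow> 'a \<times> 'a) \<Rightarrow> bool" where
  "klinear f \<longleftrightarrow> (\<forall>u v. f (vadd u v) = vadd (f u) (f v)) \<and> (\<forall>c u. f (vscale c u) = vscale c (f u))"

definition alg_iso :: "('a::field \<times> 'a \<Rightarrow> 'a \<times> 'a \<Rightarrow> 'a \<times> 'a) \<Rightarrow> ('a \<times> 'a \<Rightarrow> 'a \<times> 'a \<Rightarrow> 'a \<times> 'a) \<Rightarrow> bool" where
  "alg_iso m1 m2 \<longleftrightarrow> (\<exists>f. klinear f \<and> bij f \<and> (\<forall>x y. f (m1 x y) = m2 (f x) (f y)))"

text \<open>C^2 = span of all products; C^2 \<noteq> 0 iff some product is nonzero.\<close>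
definition square_nonzero :: "('a::field \<times> 'a \<Rightarrow> 'a \<times> 'a \<Rightarrow> 'a \<times> 'a) \<Rightarrow> bool" where
  "square_nonzero m \<longleftrightarrow> (\<exists>x y. m x y \<noteq> (0,0))"

end

theory Submission
  imports Defs
begin

text \<open>In both algebras the products span a line: the line of \<open>h\<close> in \<open>C1\<close>, on which the
  multiplication vanishes, and the line of \<open>h + r\<close> in \<open>C2\<close>, on which it does not. So
  \<open>C1\<close> and \<open>C2\<close> are told apart by whether \<open>C\<^sup>2 C\<^sup>2 = 0\<close>. In \<open>eacp2 a b\<close> every product
  is a multiple of \<open>a h + b r\<close>, whose square is \<open>a b (a h + b r)\<close>; rescaling the basis
  gives \<open>C1\<close> when \<open>a b = 0\<close> and \<open>C2\<close> when \<open>a b \<noteq> 0\<close>.\<close>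

lemma eacp2_apply:
  "eacp2 a b x y = ((fst x * snd y + snd x * fst y) * a / 2, (fst x * snd y + snd x * fst y) * b / 2)"
  unfolding eacp2_def bilin_mult_def vadd_def vscale_def by (simp add: field_simps)

lemma C1_apply: "C1 x y = (fst x * snd y + snd x * fst y, 0)"
  unfolding C1_def bilin_mult_def vadd_def vscale_def by (simp add: field_simps)

lemma C2_apply: "C2 x y = ((fst x * snd y + snd x * fst y) / 2, (fst x * snd y + snd x * fst y) / 2)"
  unfolding C2_def bilin_mult_def vadd_def vscale_def by (simp add: field_simps)

lemma square_nonzero_eacp2_iff:
  assumes "(2::'a::field) \<noteq> 0"
  shows "square_nonzero (eacp2 (a::'a) b) \<longleftrightarrow> a \<noteq> 0 \<or> b \<noteq> 0"
proof
  assume "square_nonzero (eacp2 a b)"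
  then show "a \<noteq> 0 \<or> b \<noteq> 0"
    unfolding square_nonzero_def by (auto simp: eacp2_apply)
next
  assume "a \<noteq> 0 \<or> b \<noteq> 0"
  then have "eacp2 a b (1, 0) (0, 1) \<noteq> (0, 0)"
    using assms by (auto simp: eacp2_apply)
  then show "square_nonzero (eacp2 a b)"
    unfolding square_nonzero_def by blast
qed

lemma klinear_zero:
  assumes "klinear f"
  shows "f (0, 0) = (0::'a::field, 0)"
proof -
  have "f (vscale 0 (0, 0)) = vscale 0 (f (0, 0))"
    using assms unfolding klinear_def by blast
  then show ?thesis by (simp add: vscale_def)
qed

lemma klinear_comp: "klinear f \<Longrightarrow> klinear g \<Longrightarrow> klinear (g \<circ> f)"
  unfolding klinear_def by (simp del: split_paired_All)

lemma klinear_inv: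
  assumes "klinear f" "bij f"
  shows "klinear (inv f)"
  unfolding klinear_def
proof (intro conjI allI)
  fix u v
  have "f (vadd (inv f u) (inv f v)) = vadd u v"
    using assms by (simp add: klinear_def bij_is_surj surj_f_inv_f del: split_paired_All)
  then show "inv f (vadd u v) = vadd (inv f u) (inv f v)"
    using assms(2) by (metis bij_inv_eq_iff)
next
  fix c u
  have "f (vscale c (inv f u)) = vscale c u"
    using assms by (simp add: klinear_def bij_is_surj surj_f_inv_f del: split_paired_All)
  then show "inv f (vscale c u) = vscale c (inv f u)"
    using assms(2) by (metis bij_inv_eq_iff)
qed

lemma alg_isoI:
  assumes "klinear f" "\<And>x. g (f x) = x" "\<And>x. f (g x) = x"
    and "\<And>x y. f (m1 x y) = m2 (f x) (f y)"
  shows "alg_iso m1 m2"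
proof -
  have "bij f"
    using assms(2,3) by (metis bijI')
  then show ?thesis
    unfolding alg_iso_def using assms(1,4) by blast
qed

lemma alg_iso_sym:
  assumes "alg_iso m1 m2"
  shows "alg_iso m2 m1"
proof -
  obtain f where f: "klinear f" "bij f" and hom: "\<And>x y. f (m1 x y) = m2 (f x) (f y)"
    using assms unfolding alg_iso_def by blast
  have "inv f (m2 u v) = m1 (inv f u) (inv f v)" for u v
    using hom[of "inv f u" "inv f v"] f(2) by (metis bij_inv_eq_iff)
  then show ?thesis
    unfolding alg_iso_def using klinear_inv[OF f] bij_imp_bij_inv[OF f(2)] by blast
qed

lemma alg_iso_trans:
  assumes "alg_iso m1 m2" "alg_iso m2 m3"
  shows "alg_iso m1 m3"
proof -
  obtain f where f: "klinear f" "bij f" and hom_f: "\<And>x y. f (m1 x y) = m2 (f x) (f y)"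
    using assms(1) unfolding alg_iso_def by blast
  obtain g where g: "klinear g" "bij g" and hom_g: "\<And>x y. g (m2 x y) = m3 (g x) (g y)"
    using assms(2) unfolding alg_iso_def by blast
  have "\<forall>x y. (g \<circ> f) (m1 x y) = m3 ((g \<circ> f) x) ((g \<circ> f) y)"
    by (simp add: hom_f hom_g)
  then show ?thesis
    unfolding alg_iso_def using klinear_comp[OF f(1) g(1)] bij_comp[OF f(2) g(2)] by blast
qed

definition square_mult_zero :: "('a::field \<times> 'a \<Rightarrow> 'a \<times> 'a \<Rightarrow> 'a \<times> 'a) \<Rightarrow> bool" where
  "square_mult_zero m \<longleftrightarrow> (\<forall>x y u v. m (m x y) (m u v) = (0, 0))"

lemma square_mult_zero_alg_iso:
  assumes "alg_iso m1 m2" "square_mult_zero m1"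
  shows "square_mult_zero m2"
  unfolding square_mult_zero_def
proof (intro allI)
  obtain f where f: "klinear f" "bij f" and hom: "\<And>x y. f (m1 x y) = m2 (f x) (f y)"
    using assms(1) unfolding alg_iso_def by blast
  fix x y u v
  have "m2 (m2 x y) (m2 u v) = f (m1 (m1 (inv f x) (inv f y)) (m1 (inv f u) (inv f v)))"
    using f(2) by (simp add: hom bij_is_surj surj_f_inv_f)
  also have "\<dots> = (0, 0)"
    using assms(2) klinear_zero[OF f(1)] unfolding square_mult_zero_def by (simp del: split_paired_All)
  finally show "m2 (m2 x y) (m2 u v) = (0, 0)" .
qed

lemma square_mult_zero_C1: "square_mult_zero C1"
  unfolding square_mult_zero_def by (simp add: C1_apply)

lemma not_square_mult_zero_C2:
  assumes "(2::'a::field) \<noteq> 0"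
  shows "\<not> square_mult_zero (C2 :: 'a \<times> 'a \<Rightarrow> 'a \<times> 'a \<Rightarrow> 'a \<times> 'a)"
proof -
  have "(C2::'a \<times> 'a \<Rightarrow> 'a \<times> 'a \<Rightarrow> 'a \<times> 'a) (C2 (1, 1) (1, 1)) (C2 (1, 1) (1, 1)) = (1, 1)"
    using assms by (simp add: C2_apply field_simps)
  then show ?thesis
    unfolding square_mult_zero_def by (metis zero_neq_one prod.inject)
qed

lemma C1_not_iso_C2:
  assumes "(2::'a::field) \<noteq> 0"
  shows "\<not> alg_iso (C1 :: 'a \<times> 'a \<Rightarrow> 'a \<times> 'a \<Rightarrow> 'a \<times> 'a) C2"
  using square_mult_zero_alg_iso square_mult_zero_C1 not_square_mult_zero_C2[OF assms] by blast

lemma eacp2_iso_C1_right: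
  assumes "(2::'a::field) \<noteq> 0" "(a::'a) \<noteq> 0"
  shows "alg_iso (eacp2 a 0) C1"
  by (rule alg_isoI[where f = "\<lambda>x. (fst x, a / 2 * snd x)" and g = "\<lambda>x. (fst x, 2 / a * snd x)"])
    (use assms in \<open>auto simp: klinear_def vadd_def vscale_def eacp2_apply C1_apply field_simps\<close>)

lemma eacp2_iso_C1_left:
  assumes "(2::'a::field) \<noteq> 0" "(b::'a) \<noteq> 0"
  shows "alg_iso (eacp2 0 b) C1"
  by (rule alg_isoI[where f = "\<lambda>x. (snd x, b / 2 * fst x)" and g = "\<lambda>x. (2 / b * snd x, fst x)"])
    (use assms in \<open>auto simp: klinear_def vadd_def vscale_def eacp2_apply C1_apply field_simps\<close>)

lemma eacp2_iso_C2:
  assumes "(a::'a::field) \<noteq> 0" "b \<noteq> 0"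
  shows "alg_iso (eacp2 a b) C2"
  by (rule alg_isoI[where f = "\<lambda>x. (b * fst x, a * snd x)" and g = "\<lambda>x. (fst x / b, snd x / a)"])
    (use assms in \<open>auto simp: klinear_def vadd_def vscale_def eacp2_apply C2_apply field_simps\<close>)

theorem mainTheorem13:
  fixes a b :: "'a::field"
  assumes "(2::'a) \<noteq> 0"
    and "square_nonzero (eacp2 a b)"
  shows "(alg_iso (eacp2 a b) C1 \<or> alg_iso (eacp2 a b) C2)
         \<and> \<not> (alg_iso (eacp2 a b) C1 \<and> alg_iso (eacp2 a b) C2)
         \<and> \<not> alg_iso (C1 :: 'a \<times> 'a \<Rightarrow> 'a \<times> 'a \<Rightarrow> 'a \<times> 'a) C2"
proof -
  have "a \<noteq> 0 \<or> b \<noteq> 0"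
    using assms square_nonzero_eacp2_iff by blast
  then consider "b = 0" "a \<noteq> 0" | "a = 0" "b \<noteq> 0" | "a \<noteq> 0" "b \<noteq> 0"
    by blast
  then have "alg_iso (eacp2 a b) C1 \<or> alg_iso (eacp2 a b) C2"
    by cases (use eacp2_iso_C1_right eacp2_iso_C1_left eacp2_iso_C2 assms(1) in auto)
  moreover have "\<not> (alg_iso (eacp2 a b) C1 \<and> alg_iso (eacp2 a b) C2)"
    using C1_not_iso_C2[OF assms(1)] alg_iso_trans[OF alg_iso_sym] by blast
  ultimately show ?thesis
    using C1_not_iso_C2[OF assms(1)] by blast
qed

end
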